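(* Let $\Omega$ be a finite sample space and let $P\neq Q$ be two probability distributions on $\Omega$. For every $\lambda\in(0,1)$, $$L(\lambda)\,H^2(P,Q)\le \mathrm{GJS}_\lambda(P\parallel Q)\le U(\lambda)\,H^2(P,Q)\le H^2(P,Q).$$ In particular, for $\lambda=1/2$, $\ln 2\le \mathrm{JS}(P\parallel Q)/H^2(P,Q)\le 1$.
   Context: $\mathrm{KL}(P\parallel Q)=\sum_{i:P(i)>0}P(i)\ln\frac{P(i)}{Q(i)}$. For $\lambda\in[0,1]$ and $M_\lambda=\lambda P+(1-\lambda)Q$, $\mathrm{GJS}_\lambda(P\parallel Q)=\lambda\,\mathrm{KL}(P\parallel M_\lambda)+(1-\lambda)\,\mathrm{KL}(Q\parallel M_\lambda)$, and $\mathrm{JS}=\mathrm{GJS}_{1/2}$. The squared Hellinger distance is $H^2(P,Q)=\frac12\sum_{i\in\Omega}(\sqrt{P(i)}-\sqrt{Q(i)})^2$. With $\eta(\lambda)=-\lambda\ln\lambda$, $L(\lambda)=2\min\{\eta(\lambda),\eta(1-\lambda)\}$ and $U(\lambda)=\frac{2\lambda(1-\lambda)}{1-2\lambda}\ln\frac{1-\lambda}{\lambda}$ for $\lambda\neq1/2$, $U(1/2)=1$. *)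

theory Defs
  imports Complex_Main
begin

definition is_distr :: "('a::finite \<Rightarrow> real) \<Rightarrow> bool" where
  "is_distr P \<longleftrightarrow> (\<forall>i. 0 \<le> P i) \<and> (\<Sum>i\<in>UNIV. P i) = 1"

definition KL :: "('a::finite \<Rightarrow> real) \<Rightarrow> ('a \<Rightarrow> real) \<Rightarrow> real" where
  "KL P Q = (\<Sum>i | P i > 0. P i * ln (P i / Q i))"

definition GJS :: "real \<Rightarrow> ('a::finite \<Rightarrow> real) \<Rightarrow> ('a \<Rightarrow> real) \<Rightarrow> real" where
  "GJS l P Q = (let M = (\<lambda>i. l * P i + (1 - l) * Q i) in l * KL P M + (1 - l) * KL Q M)"

definition JS :: "('a::finite \<Rightarrow> real) \<Rightarrow> ('a \<Rightarrow> real) \<Rightarrow> real" where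
  "JS P Q = GJS (1/2) P Q"

definition hellinger_sq :: "('a::finite \<Rightarrow> real) \<Rightarrow> ('a \<Rightarrow> real) \<Rightarrow> real" where
  "hellinger_sq P Q = (1/2) * (\<Sum>i\<in>UNIV. (sqrt (P i) - sqrt (Q i))^2)"

definition eta :: "real \<Rightarrow> real" where
  "eta l = - l * ln l"

definition Lfun :: "real \<Rightarrow> real" where
  "Lfun l = 2 * min (eta l) (eta (1 - l))"

definition Ufun :: "real \<Rightarrow> real" where
  "Ufun l = (if l = 1/2 then 1 else (2 * l * (1 - l)) / (1 - 2 * l) * ln ((1 - l) / l))"

end

theory Submission
  imports Defs "HOL-Real_Asymp.Real_Asymp"
begin

(* Both sides are sums over the sample space of terms that are homogeneous of degree one in
   (P i, Q i): with u = l and v = 1 - l, GJS is the sum of the Jensen gaps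
   J(p, q) = u p ln p + v q ln q - m ln m (m = u p + v q) of the convex function x ln x, and
   H^2 is half the sum of (sqrt p - sqrt q)^2. So it suffices to compare J(s^2, 1) with
   C (s - 1)^2 for s >= 0, where C = L(l)/2 or C = U(l)/2; the symmetry
   J_{u,v}(p, q) = J_{v,u}(q, p) reduces s > 1 (lower bound) and l > 1/2 (upper bound) to the
   complementary cases.

   The comparison is a sign analysis of the scaled defect
   Phi(s) = (C (s - 1)^2 - J(s^2, 1)) / (u s^2 + v). Dividing by the mixture removes its
   logarithm from the derivative: Phi'(s) = 2 s psi(s) / (u s^2 + v)^2 with the defect slope
   psi(s) = C (u s + v - u - v/s) - 2 u v ln s, and psi'(s) = q(s) / s^2 for the convex
   quadratic q(s) = C (u s^2 + v) - 2 u v s. Always Phi(1) = psi(1) = 0. For the lower bound,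
   Phi(0) <= 0 as C <= eta(v), and convexity of q lets psi change sign at most once on (0, 1].
   U(l)/2 is the constant for which moreover Phi(v/u) = 0 and psi(v/(u s)) = -psi(s); this
   fixes the sign of psi between the points 1, sqrt(v/u) and v/u. The constants satisfy
   2 u v <= U(l)/2 <= sqrt(u v), i.e. the logarithmic mean of u and v lies between their
   geometric and arithmetic means. *)

lemma ln_ge_two_diff_div_add:
  fixes x :: real
  assumes "1 \<le> x"
  shows "2 * (x - 1) / (x + 1) \<le> ln x"
proof -
  let ?f = "\<lambda>t::real. ln t - 2 * (t - 1) / (t + 1)"
  have "?f 1 \<le> ?f x"
  proof (rule DERIV_nonneg_imp_nondecreasing[OF assms])
    fix t :: real
    assume t: "1 \<le> t" "t \<le> x"
    have "DERIV ?f t :> 1 / t - 4 / (t + 1)^2"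
      using t by (auto intro!: derivative_eq_intros simp: field_simps power2_eq_square)
    moreover have "1 / t - 4 / (t + 1)^2 = (t - 1)^2 / (t * (t + 1)^2)"
      using t by (simp add: divide_simps) (simp add: algebra_simps power2_eq_square)
    ultimately show "\<exists>y. DERIV ?f t :> y \<and> 0 \<le> y"
      using t by auto
  qed
  then show ?thesis by simp
qed

lemma two_ln_less_diff_inverse:
  fixes y :: real
  assumes "1 < y"
  shows "2 * ln y < y - 1 / y"
proof -
  let ?f = "\<lambda>t::real. t - 1 / t - 2 * ln t"
  have "?f 1 < ?f y"
  proof (rule DERIV_pos_imp_increasing_open[OF assms])
    fix t :: real
    assume t: "1 < t" "t < y"
    have "DERIV ?f t :> 1 + 1 / t^2 - 2 / t"
      using t by (auto intro!: derivative_eq_intros simp: field_simps power2_eq_square)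
    moreover have "1 + 1 / t^2 - 2 / t = (t - 1)^2 / t^2"
      using t by (simp add: field_simps power2_eq_square)
    ultimately show "\<exists>y. DERIV ?f t :> y \<and> 0 < y"
      using t by auto
  qed (intro continuous_intros, auto)
  then show ?thesis by simp
qed

lemma ln_less_diff_div_sqrt:
  fixes x :: real
  assumes "1 < x"
  shows "ln x < (x - 1) / sqrt x"
proof -
  have "2 * ln (sqrt x) < sqrt x - 1 / sqrt x"
    using assms by (intro two_ln_less_diff_inverse) simp
  moreover have "2 * ln (sqrt x) = ln x"
    using assms by (simp add: ln_sqrt)
  moreover have "sqrt x - 1 / sqrt x = (x - 1) / sqrt x"
    using assms by (simp add: field_simps)
  ultimately show ?thesis by simp
qed

lemma log_mean_bounds:
  fixes u v :: real
  assumes "0 < u" "u < v"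
  shows "sqrt (u * v) \<le> (v - u) / ln (v / u)"
    and "(v - u) / ln (v / u) \<le> (u + v) / 2"
proof -
  have ln_pos: "0 < ln (v / u)"
    using assms by simp
  have "ln (v / u) \<le> (v / u - 1) / sqrt (v / u)"
    using assms by (intro less_imp_le ln_less_diff_div_sqrt) simp
  also have "\<dots> = (v - u) / (u * sqrt (v / u))"
    using assms by (simp add: field_simps)
  also have "u * sqrt (v / u) = sqrt (u * v)"
    using assms by (auto simp: real_sqrt_mult real_sqrt_divide field_simps)
  finally show "sqrt (u * v) \<le> (v - u) / ln (v / u)"
    using ln_pos assms by (simp add: le_divide_eq field_simps)
  have "v / u - 1 = (v - u) / u" "v / u + 1 = (u + v) / u"
    using assms by (simp_all add: field_simps)
  then have "2 * (v - u) / (u + v) = 2 * (v / u - 1) / (v / u + 1)"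
    using assms by simp
  also have "\<dots> \<le> ln (v / u)"
    using assms by (intro ln_ge_two_diff_div_add) simp
  finally show "(v - u) / ln (v / u) \<le> (u + v) / 2"
    using ln_pos assms by (simp add: divide_le_eq field_simps)
qed

lemma eta_nonneg: "0 \<le> x \<Longrightarrow> x \<le> 1 \<Longrightarrow> 0 \<le> eta x"
  unfolding eta_def by (cases "x = 0") (simp_all add: mult_nonneg_nonpos)

lemma eta_le_two_mult_compl:
  assumes "1/2 \<le> x" "x \<le> 1"
  shows "eta x \<le> 2 * x * (1 - x)"
proof -
  have x: "0 < x" using assms by simp
  have "- ln x = ln (1 / x)"
    using x by (simp add: ln_div)
  also have "\<dots> \<le> 1 / x - 1"
    using x by (intro ln_le_minus_one) simp
  also have "\<dots> = (1 - x) / x"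
    using x by (simp add: field_simps)
  also have "\<dots> \<le> (1 - x) / (1/2)"
    using assms by (intro divide_left_mono) auto
  finally have "x * (- ln x) \<le> x * (2 * (1 - x))"
    using x by (intro mult_left_mono) auto
  then show ?thesis
    unfolding eta_def by (simp add: algebra_simps)
qed

lemma Lfun_half_le:
  assumes "0 < l" "l < 1"
  shows "Lfun l / 2 \<le> 2 * l * (1 - l)"
proof (cases "l \<le> 1/2")
  case True
  then have "eta (1 - l) \<le> 2 * (1 - l) * (1 - (1 - l))"
    using assms by (intro eta_le_two_mult_compl) auto
  then show ?thesis
    unfolding Lfun_def by (simp add: algebra_simps)
next
  case False
  then have "eta l \<le> 2 * l * (1 - l)"
    using assms by (intro eta_le_two_mult_compl) auto
  then show ?thesis
    unfolding Lfun_def by simp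
qed

lemma Ufun_sym:
  assumes "0 < l" "l < 1"
  shows "Ufun (1 - l) = Ufun l"
proof (cases "l = 1/2")
  case False
  have "ln (l / (1 - l)) = - ln ((1 - l) / l)"
    using assms by (simp add: ln_div)
  with False show ?thesis
    unfolding Ufun_def by (simp add: field_simps)
next
  case True
  show ?thesis
    unfolding True by simp
qed

lemma Ufun_half_bounds:
  assumes "0 < l" "l \<le> 1/2"
  shows "2 * l * (1 - l) \<le> Ufun l / 2"
    and "Ufun l / 2 \<le> sqrt (l * (1 - l))"
    and "Ufun l / 2 * ((1 - l) - l) = l * (1 - l) * ln ((1 - l) / l)"
proof -
  consider "l = 1/2" | "l < 1/2"
    using assms by linarith
  then have "2 * l * (1 - l) \<le> Ufun l / 2 \<and> Ufun l / 2 \<le> sqrt (l * (1 - l))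
      \<and> Ufun l / 2 * ((1 - l) - l) = l * (1 - l) * ln ((1 - l) / l)"
  proof cases
    case 1
    have "sqrt (1/4 :: real) = 1/2"
      by (simp add: real_sqrt_divide)
    then show ?thesis
      unfolding 1 by (simp add: Ufun_def)
  next
    case 2
    define u v where "u = l" and "v = 1 - l"
    define M where "M = (v - u) / ln (v / u)"
    have uv: "0 < u" "u < v" "u + v = 1"
      using assms 2 by (auto simp: u_def v_def)
    have M: "sqrt (u * v) \<le> M" "M \<le> 1/2"
      using log_mean_bounds[OF uv(1,2)] uv(3) by (simp_all add: M_def)
    have "0 < sqrt (u * v)"
      using uv by simp
    then have "0 < M"
      using M by linarith
    have U: "Ufun l / 2 = u * v / M"
      using 2 unfolding Ufun_def u_def v_def M_def by (simp add: field_simps)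
    have "2 * u * v = u * v / (1/2)"
      by simp
    also have "\<dots> \<le> u * v / M"
      using M \<open>0 < M\<close> uv by (intro divide_left_mono) auto
    finally have lower: "2 * u * v \<le> u * v / M" .
    have "u * v / M \<le> u * v / sqrt (u * v)"
      using M \<open>0 < sqrt (u * v)\<close> \<open>0 < M\<close> uv by (intro divide_left_mono) auto
    also have "\<dots> = sqrt (u * v)"
      using uv by (simp add: real_div_sqrt)
    finally have upper: "u * v / M \<le> sqrt (u * v)" .
    have "u * v / M * (v - u) = u * v * ln (v / u)"
      using uv unfolding M_def by simp
    then show ?thesis
      unfolding U using lower upper unfolding u_def v_def by blast
  qed
  then show "2 * l * (1 - l) \<le> Ufun l / 2" "Ufun l / 2 \<le> sqrt (l * (1 - l))"
    "Ufun l / 2 * ((1 - l) - l) = l * (1 - l) * ln ((1 - l) / l)"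
    by auto
qed

lemma Ufun_le_one:
  assumes "0 < l" "l < 1"
  shows "Ufun l \<le> 1"
proof -
  have "Ufun l / 2 \<le> sqrt (l * (1 - l))"
  proof (cases "l \<le> 1/2")
    case True
    then show ?thesis
      using Ufun_half_bounds(2) assms by blast
  next
    case False
    then have "Ufun (1 - l) / 2 \<le> sqrt ((1 - l) * (1 - (1 - l)))"
      using Ufun_half_bounds(2)[of "1 - l"] assms by auto
    then show ?thesis
      using Ufun_sym[OF assms] by (simp add: mult.commute)
  qed
  also have "\<dots> \<le> sqrt (1/4)"
  proof (rule real_sqrt_le_mono)
    have "l * (1 - l) = 1/4 - (l - 1/2)^2"
      by (simp add: power2_eq_square algebra_simps)
    then show "l * (1 - l) \<le> 1/4"
      by simp
  qed
  also have "\<dots> = 1/2"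
    by (simp add: real_sqrt_divide)
  finally show ?thesis by simp
qed

definition jensen_gap :: "real \<Rightarrow> real \<Rightarrow> real \<Rightarrow> real \<Rightarrow> real" where
  "jensen_gap u v p q = u * p * ln p + v * q * ln q - (u * p + v * q) * ln (u * p + v * q)"

lemma jensen_gap_commute: "jensen_gap u v p q = jensen_gap v u q p"
  unfolding jensen_gap_def by (simp add: algebra_simps)

lemma jensen_gap_scale:
  assumes "0 \<le> u" "0 \<le> v" "0 < c" "0 \<le> p" "0 \<le> q"
  shows "jensen_gap u v (c * p) (c * q) = c * jensen_gap u v p q"
proof -
  have ln_scale: "x * ln (c * x) = x * ln c + x * ln x" if "0 \<le> x" for x
    using that assms(3) by (cases "x = 0") (simp_all add: ln_mult algebra_simps)
  have "jensen_gap u v (c * p) (c * q) =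
      c * (u * (p * ln (c * p)) + v * (q * ln (c * q))
        - (u * p + v * q) * ln (c * (u * p + v * q)))"
    unfolding jensen_gap_def by (simp add: algebra_simps)
  also have "\<dots> = c * jensen_gap u v p q"
    using ln_scale[of p] ln_scale[of q] ln_scale[of "u * p + v * q"] assms
    by (simp add: jensen_gap_def algebra_simps)
  finally show ?thesis .
qed

lemma jensen_gap_reflect:
  assumes "0 \<le> u" "0 \<le> v" "0 < s"
  shows "C * (s - 1)^2 - jensen_gap u v (s^2) 1
       = s^2 * (C * (1 / s - 1)^2 - jensen_gap v u ((1 / s)^2) 1)"
proof -
  have "jensen_gap u v (s^2) 1 = jensen_gap v u (s^2 * (1 / s)^2) (s^2 * 1)"
    using assms by (simp add: jensen_gap_commute power_divide)
  also have "\<dots> = s^2 * jensen_gap v u ((1 / s)^2) 1"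
    using assms by (intro jensen_gap_scale) auto
  finally show ?thesis
    using assms by (simp add: field_simps power2_eq_square)
qed

lemma tendsto_jensen_gap_at_right_0:
  assumes "0 < v"
  shows "((\<lambda>s. jensen_gap u v (s^2) 1) \<longlongrightarrow> jensen_gap u v 0 1) (at_right 0)"
proof -
  have "((\<lambda>s::real. s^2 * ln (s^2)) \<longlongrightarrow> 0) (at_right 0)"
    by real_asymp
  then have "((\<lambda>s. u * (s^2 * ln (s^2)) - (u * s^2 + v) * ln (u * s^2 + v))
      \<longlongrightarrow> u * 0 - (u * 0^2 + v) * ln (u * 0^2 + v)) (at_right 0)"
    using assms by (intro tendsto_intros) auto
  then show ?thesis
    by (simp add: jensen_gap_def algebra_simps)
qed

definition scaled_defect :: "real \<Rightarrow> real \<Rightarrow> real \<Rightarrow> real \<Rightarrow> real" where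
  "scaled_defect u v C s = (C * (s - 1)^2 - jensen_gap u v (s^2) 1) / (u * s^2 + v)"

definition defect_slope :: "real \<Rightarrow> real \<Rightarrow> real \<Rightarrow> real \<Rightarrow> real" where
  "defect_slope u v C s = C * (u * s + v - u - v / s) - 2 * u * v * ln s"

definition slope_quadratic :: "real \<Rightarrow> real \<Rightarrow> real \<Rightarrow> real \<Rightarrow> real" where
  "slope_quadratic u v C s = C * (u * s^2 + v) - 2 * u * v * s"

lemma has_real_derivative_scaled_defect:
  assumes "0 \<le> u" "0 < v" "0 < s"
  shows "(scaled_defect u v C has_real_derivative
           2 * s * defect_slope u v C s / (u * s^2 + v)^2) (at s)"
proof -
  let ?E = "\<lambda>x. (C * (x - 1)^2 - 2 * u * x^2 * ln x + (u * x^2 + v) * ln (u * x^2 + v))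
                / (u * x^2 + v)"
  have m: "0 < u * s^2 + v"
    using assms by (simp add: add_nonneg_pos)
  have "(?E has_real_derivative 2 * s * defect_slope u v C s / (u * s^2 + v)^2) (at s)"
    using assms m unfolding defect_slope_def
    by (auto intro!: derivative_eq_intros) (simp add: divide_simps; simp add: algebra_simps power2_eq_square)
  then show ?thesis
  proof (rule has_field_derivative_transform_within_open)
    fix x :: real
    assume "x \<in> {0<..}"
    then have "ln (x^2) = 2 * ln x" by (simp add: ln_realpow)
    then show "?E x = scaled_defect u v C x"
      unfolding scaled_defect_def jensen_gap_def by simp
  qed (use assms in auto)
qed

lemma has_real_derivative_defect_slope:
  assumes "0 < s"
  shows "(defect_slope u v C has_real_derivative slope_quadratic u v C s / s^2) (at s)"
proof -
  have "(defect_slope u v C has_real_derivative C * (u + v / s^2) - 2 * u * v / s) (at s)"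
    unfolding defect_slope_def using assms
    by (auto intro!: derivative_eq_intros simp: field_simps power2_eq_square)
  moreover have "C * (u + v / s^2) - 2 * u * v / s = slope_quadratic u v C s / s^2"
    unfolding slope_quadratic_def using assms by (simp add: field_simps power2_eq_square)
  ultimately show ?thesis by simp
qed

lemma scaled_defect_mono:
  assumes "0 \<le> u" "0 < v" "0 < x" "x \<le> y"
    and "\<And>t. x \<le> t \<Longrightarrow> t \<le> y \<Longrightarrow> 0 \<le> defect_slope u v C t"
  shows "scaled_defect u v C x \<le> scaled_defect u v C y"
proof (rule DERIV_nonneg_imp_nondecreasing[OF assms(4)])
  fix t
  assume t: "x \<le> t" "t \<le> y"
  then have "0 \<le> 2 * t * defect_slope u v C t / (u * t^2 + v)^2"
    using assms by simp
  then show "\<exists>D. DERIV (scaled_defect u v C) t :> D \<and> 0 \<le> D"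
    using assms t has_real_derivative_scaled_defect[of u v t C] by auto
qed

lemma scaled_defect_antimono:
  assumes "0 \<le> u" "0 < v" "0 < x" "x \<le> y"
    and "\<And>t. x \<le> t \<Longrightarrow> t \<le> y \<Longrightarrow> defect_slope u v C t \<le> 0"
  shows "scaled_defect u v C y \<le> scaled_defect u v C x"
proof (rule DERIV_nonpos_imp_nonincreasing[OF assms(4)])
  fix t
  assume t: "x \<le> t" "t \<le> y"
  then have "2 * t * defect_slope u v C t / (u * t^2 + v)^2 \<le> 0"
    using assms by (intro divide_nonpos_nonneg mult_nonneg_nonpos) auto
  then show "\<exists>D. DERIV (scaled_defect u v C) t :> D \<and> D \<le> 0"
    using assms t has_real_derivative_scaled_defect[of u v t C] by auto
qed

lemma defect_slope_mono:
  assumes "0 < x" "x \<le> y" "\<And>t. x \<le> t \<Longrightarrow> t \<le> y \<Longrightarrow> 0 \<le> slope_quadratic u v C t"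
  shows "defect_slope u v C x \<le> defect_slope u v C y"
proof (rule DERIV_nonneg_imp_nondecreasing[OF assms(2)])
  fix t
  assume "x \<le> t" "t \<le> y"
  then show "\<exists>D. DERIV (defect_slope u v C) t :> D \<and> 0 \<le> D"
    using assms has_real_derivative_defect_slope[of t u v C] by auto
qed

lemma defect_slope_antimono:
  assumes "0 < x" "x \<le> y" "\<And>t. x \<le> t \<Longrightarrow> t \<le> y \<Longrightarrow> slope_quadratic u v C t \<le> 0"
  shows "defect_slope u v C y \<le> defect_slope u v C x"
proof (rule DERIV_nonpos_imp_nonincreasing[OF assms(2)])
  fix t
  assume t: "x \<le> t" "t \<le> y"
  then have "slope_quadratic u v C t / t^2 \<le> 0"
    using assms by (simp add: divide_nonpos_nonneg)
  then show "\<exists>D. DERIV (defect_slope u v C) t :> D \<and> D \<le> 0"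
    using assms t has_real_derivative_defect_slope[of t u v C] by auto
qed

lemma slope_quadratic_nonpos_between:
  assumes "0 \<le> C * u" "z \<le> w" "w \<le> r"
    and "slope_quadratic u v C z \<le> 0" "slope_quadratic u v C r \<le> 0"
  shows "slope_quadratic u v C w \<le> 0"
proof (cases "z = r")
  case False
  then have "0 < r - z" using assms by auto
  moreover have "(r - z) * slope_quadratic u v C w
      = (r - w) * slope_quadratic u v C z + (w - z) * slope_quadratic u v C r
        - (C * u) * ((w - z) * (r - w)) * (r - z)"
    unfolding slope_quadratic_def by (simp add: algebra_simps power2_eq_square)
  moreover have "0 \<le> (C * u) * ((w - z) * (r - w)) * (r - z)"
    using assms by simp
  moreover have "(r - w) * slope_quadratic u v C z \<le> 0" "(w - z) * slope_quadratic u v C r \<le> 0"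
    using assms by (simp_all add: mult_nonneg_nonpos)
  ultimately have "(r - z) * slope_quadratic u v C w \<le> 0"
    by linarith
  with \<open>0 < r - z\<close> show ?thesis
    by (simp add: mult_le_0_iff)
qed (use assms in auto)

lemma defect_slope_at_1 [simp]: "defect_slope u v C 1 = 0"
  unfolding defect_slope_def by simp

lemma scaled_defect_at_1: "u + v = 1 \<Longrightarrow> scaled_defect u v C 1 = 0"
  unfolding scaled_defect_def jensen_gap_def by simp

lemma scaled_defect_nonpos_iff:
  assumes "0 \<le> u" "0 < v"
  shows "scaled_defect u v C s \<le> 0 \<longleftrightarrow> C * (s - 1)^2 \<le> jensen_gap u v (s^2) 1"
proof -
  have "0 < u * s^2 + v"
    using assms by (simp add: add_nonneg_pos)
  then show ?thesis
    unfolding scaled_defect_def by (simp add: divide_le_0_iff)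
qed

lemma scaled_defect_nonneg_iff:
  assumes "0 \<le> u" "0 < v"
  shows "0 \<le> scaled_defect u v C s \<longleftrightarrow> jensen_gap u v (s^2) 1 \<le> C * (s - 1)^2"
proof -
  have "0 < u * s^2 + v"
    using assms by (simp add: add_nonneg_pos)
  then show ?thesis
    unfolding scaled_defect_def by (simp add: zero_le_divide_iff)
qed

lemma tendsto_scaled_defect_at_right_0:
  assumes "0 < v"
  shows "(scaled_defect u v C \<longlongrightarrow> scaled_defect u v C 0) (at_right 0)"
proof -
  have "((\<lambda>s. jensen_gap u v (s^2) 1) \<longlongrightarrow> jensen_gap u v (0^2) 1) (at_right 0)"
    using tendsto_jensen_gap_at_right_0[OF assms] by simp
  then show ?thesis
    unfolding scaled_defect_def[abs_def] using assms by (intro tendsto_intros) auto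
qed

lemma defect_slope_nonpos_below:
  assumes "0 \<le> C * u" "slope_quadratic u v C 1 \<le> 0"
    and "t \<le> 1" "defect_slope u v C t < 0" "0 < x" "x \<le> t"
  shows "defect_slope u v C x \<le> 0"
proof -
  \<comment> \<open>Otherwise q < 0 somewhere in [x, t], so by convexity q <= 0 on [t, 1],
     forcing psi(t) >= psi(1) = 0.\<close>
  have "0 \<le> slope_quadratic u v C p" if p: "x \<le> p" "p \<le> t" for p
  proof (rule ccontr)
    assume "\<not> 0 \<le> slope_quadratic u v C p"
    then have "slope_quadratic u v C w \<le> 0" if "t \<le> w" "w \<le> 1" for w
      using slope_quadratic_nonpos_between[of C u p w 1 v] assms p that by auto
    then have "defect_slope u v C 1 \<le> defect_slope u v C t"
      using assms by (intro defect_slope_antimono) auto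
    then show False
      using assms by simp
  qed
  then have "defect_slope u v C x \<le> defect_slope u v C t"
    using assms by (intro defect_slope_mono) auto
  then show ?thesis
    using assms by simp
qed

lemma sq_diff_le_jensen_gap_unit_interval:
  assumes "u + v = 1" "0 < u" "0 < v" "0 \<le> C" "C \<le> eta v" "C \<le> 2 * u * v"
    and "0 \<le> s" "s \<le> 1"
  shows "C * (s - 1)^2 \<le> jensen_gap u v (s^2) 1"
proof -
  have at_0: "scaled_defect u v C 0 \<le> 0"
    using assms by (simp add: scaled_defect_nonpos_iff jensen_gap_def eta_def)
  have q_1: "slope_quadratic u v C 1 \<le> 0"
    using assms unfolding slope_quadratic_def by simp
  consider "s = 0"
    | "0 < s" "\<forall>t. s \<le> t \<longrightarrow> t \<le> 1 \<longrightarrow> 0 \<le> defect_slope u v C t"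
    | t where "0 < s" "s \<le> t" "t \<le> 1" "defect_slope u v C t < 0"
    using assms(7) by (metis le_less not_le)
  then have "scaled_defect u v C s \<le> 0"
  proof cases
    case 1
    with at_0 show ?thesis by simp
  next
    case 2
    then have "scaled_defect u v C s \<le> scaled_defect u v C 1"
      using assms by (intro scaled_defect_mono) auto
    then show ?thesis
      using assms by (simp add: scaled_defect_at_1)
  next
    case 3
    have "scaled_defect u v C s \<le> scaled_defect u v C x" if "0 < x" "x < s" for x
    proof (rule scaled_defect_antimono)
      fix \<tau>
      assume "x \<le> \<tau>" "\<tau> \<le> s"
      then show "defect_slope u v C \<tau> \<le> 0"
        using 3 assms q_1 that by (intro defect_slope_nonpos_below[where t = t]) auto
    qed (use assms that in auto)
    then have "\<forall>\<^sub>F x in at_right 0. scaled_defect u v C s \<le> scaled_defect u v C x"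
      using \<open>0 < s\<close> eventually_at_right_field by blast
    then have "scaled_defect u v C s \<le> scaled_defect u v C 0"
      using tendsto_scaled_defect_at_right_0[OF \<open>0 < v\<close>] by (intro tendsto_lowerbound) auto
    with at_0 show ?thesis by simp
  qed
  then show ?thesis
    using assms by (simp add: scaled_defect_nonpos_iff)
qed

lemma sq_diff_le_jensen_gap:
  assumes "u + v = 1" "0 < u" "0 < v" "0 \<le> C" "C \<le> eta u" "C \<le> eta v" "C \<le> 2 * u * v"
    and "0 \<le> s"
  shows "C * (s - 1)^2 \<le> jensen_gap u v (s^2) 1"
proof (cases "s \<le> 1")
  case True
  then show ?thesis
    using assms sq_diff_le_jensen_gap_unit_interval by blast
next
  case False
  then have "C * (1 / s - 1)^2 \<le> jensen_gap v u ((1 / s)^2) 1"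
    using assms by (intro sq_diff_le_jensen_gap_unit_interval) (auto simp: algebra_simps)
  then have "s^2 * (C * (1 / s - 1)^2 - jensen_gap v u ((1 / s)^2) 1) \<le> 0"
    by (simp add: mult_nonneg_nonpos)
  then show ?thesis
    using jensen_gap_reflect[of u v s C] assms False by simp
qed

lemma Lfun_le_jensen_gap:
  assumes "0 < l" "l < 1" "0 \<le> s"
  shows "Lfun l / 2 * (s - 1)^2 \<le> jensen_gap l (1 - l) (s^2) 1"
proof -
  have "Lfun l / 2 \<le> eta l" "Lfun l / 2 \<le> eta (1 - l)"
    unfolding Lfun_def by simp_all
  moreover have "0 \<le> Lfun l / 2"
    using assms eta_nonneg[of l] eta_nonneg[of "1 - l"] unfolding Lfun_def by simp
  ultimately show ?thesis
    using sq_diff_le_jensen_gap[of l "1 - l" "Lfun l / 2" s] Lfun_half_le assms by simp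
qed

lemma defect_slope_reflect:
  assumes "0 < u" "0 < v" "0 < x"
  shows "defect_slope u v C (v / (u * x)) + defect_slope u v C x
       = 2 * (C * (v - u) - u * v * ln (v / u))"
proof -
  have ln_reflect: "ln (v / (u * x)) = ln (v / u) - ln x"
    using assms by (simp add: ln_div ln_mult)
  show ?thesis
    unfolding defect_slope_def ln_reflect using assms by (simp add: field_simps)
qed

lemma scaled_defect_at_ratio:
  assumes "u + v = 1" "0 < u" "0 < v" "C * (v - u) = u * v * ln (v / u)"
  shows "scaled_defect u v C (v / u) = 0"
proof -
  define L where "L = ln (v / u)"
  have "u * (v / u)^2 + v = v * (u + v) / u"
    using \<open>0 < u\<close> by (simp add: field_simps power2_eq_square)
  then have mix: "u * (v / u)^2 + v = v / u"
    using assms by simp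
  have "ln ((v / u)^2) = 2 * L"
    using assms by (simp add: L_def ln_realpow)
  then have "jensen_gap u v ((v / u)^2) 1 = u * (v / u)^2 * (2 * L) - v / u * L"
    unfolding jensen_gap_def by (simp add: mix L_def)
  also have "\<dots> = v / u * (2 * v - 1) * L"
    using \<open>0 < u\<close> by (simp add: field_simps power2_eq_square)
  also have "\<dots> = v / u * (v - u) * L"
    using assms by (simp add: \<open>u + v = 1\<close>[symmetric])
  also have "\<dots> = u * v * L * (v - u) / u^2"
    using \<open>0 < u\<close> by (simp add: field_simps power2_eq_square)
  also have "\<dots> = C * (v - u) * (v - u) / u^2"
    using assms(4) by (simp only: L_def)
  also have "\<dots> = C * (v / u - 1)^2"
    using \<open>0 < u\<close> by (simp add: field_simps power2_eq_square)
  finally show ?thesis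
    unfolding scaled_defect_def by simp
qed

lemma defect_slope_nonneg_before_root:
  assumes "0 \<le> C * u" "defect_slope u v C r = 0" "slope_quadratic u v C r \<le> 0"
    and "1 \<le> x" "x \<le> r"
  shows "0 \<le> defect_slope u v C x"
proof (cases "\<forall>z. 1 \<le> z \<longrightarrow> z \<le> x \<longrightarrow> 0 \<le> slope_quadratic u v C z")
  case True
  then have "defect_slope u v C 1 \<le> defect_slope u v C x"
    using assms by (intro defect_slope_mono) auto
  then show ?thesis by simp
next
  case False
  then obtain z where "1 \<le> z" "z \<le> x" "slope_quadratic u v C z < 0"
    by auto
  then have "slope_quadratic u v C w \<le> 0" if "x \<le> w" "w \<le> r" for w
    using slope_quadratic_nonpos_between[of C u z w r v] assms that by auto
  then have "defect_slope u v C r \<le> defect_slope u v C x"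
    using assms by (intro defect_slope_antimono) auto
  then show ?thesis
    using assms by simp
qed

lemma defect_slope_nonpos_le_1:
  assumes "u + v = 1" "0 \<le> u" "0 \<le> C" "C \<le> v" "2 * u * v \<le> C" "0 < x" "x \<le> 1"
  shows "defect_slope u v C x \<le> 0"
proof -
  have "0 \<le> slope_quadratic u v C w" if "w \<le> 1" for w
  proof -
    have "slope_quadratic u v C w
        = (C * (u + v) - 2 * u * v) + u * (1 - w) * (2 * v - C * (w + 1))"
      by (simp add: slope_quadratic_def algebra_simps power2_eq_square)
    moreover have "C * (w + 1) \<le> C * 2"
      using assms that by (intro mult_left_mono) auto
    ultimately show ?thesis
      using assms that by simp
  qed
  then show ?thesis
    using defect_slope_mono[of x 1 u v C] assms by simp
qed

lemma defect_slope_upper_signs: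
  assumes "u + v = 1" "0 < u" "u \<le> v"
    and "2 * u * v \<le> C" "C \<le> sqrt (u * v)" "C * (v - u) = u * v * ln (v / u)"
  shows "0 < x \<Longrightarrow> x \<le> 1 \<Longrightarrow> defect_slope u v C x \<le> 0"
    and "1 \<le> x \<Longrightarrow> x \<le> sqrt (v / u) \<Longrightarrow> 0 \<le> defect_slope u v C x"
    and "sqrt (v / u) \<le> x \<Longrightarrow> x \<le> v / u \<Longrightarrow> defect_slope u v C x \<le> 0"
    and "v / u \<le> x \<Longrightarrow> 0 \<le> defect_slope u v C x"
proof -
  define \<rho> where "\<rho> = sqrt (v / u)"
  have v: "0 < v" using assms by simp
  have "0 < 2 * u * v"
    using assms v by simp
  then have C_0: "0 \<le> C"
    using assms by linarith
  have "sqrt (u * v) \<le> sqrt (v * v)"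
    using assms by (intro real_sqrt_le_mono mult_right_mono) auto
  then have C_v: "C \<le> v"
    using assms v by simp
  have reflect: "defect_slope u v C (v / (u * y)) = - defect_slope u v C y" if "0 < y" for y
    using defect_slope_reflect[OF assms(2) v that, of C] assms(6) by simp
  have \<rho>: "1 \<le> \<rho>" "\<rho>^2 = v / u" "u * \<rho> = sqrt (u * v)"
    using assms v by (auto simp: \<rho>_def real_sqrt_mult real_sqrt_divide field_simps)
  have \<rho>_fixed: "v / (u * \<rho>) = \<rho>"
    using \<rho> assms by (simp add: field_simps power2_eq_square)
  \<comment> \<open>rho is fixed by the sign-reversing reflection, hence a zero of psi\<close>
  then have root: "defect_slope u v C \<rho> = 0"
    using reflect[of \<rho>] \<rho> by simp
  have "slope_quadratic u v C \<rho> = 2 * v * (C - u * \<rho>)"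
    using \<rho> assms by (simp add: slope_quadratic_def field_simps)
  then have q_\<rho>: "slope_quadratic u v C \<rho> \<le> 0"
    using \<rho> assms v by (simp add: mult_nonneg_nonpos)
  show le_1: "defect_slope u v C y \<le> 0" if "0 < y" "y \<le> 1" for y
    using defect_slope_nonpos_le_1[of u v C y] assms C_0 C_v that by simp
  show between: "0 \<le> defect_slope u v C y" if "1 \<le> y" "y \<le> \<rho>" for y
    using defect_slope_nonneg_before_root[OF _ root q_\<rho> that] assms C_0 by simp
  show "defect_slope u v C x \<le> 0" if "\<rho> \<le> x" "x \<le> v / u"
  proof -
    have "0 < x"
      using \<rho> that by simp
    moreover have "1 \<le> v / (u * x)"
      using that \<open>0 < x\<close> assms by (simp add: field_simps)
    moreover have "v / (u * x) \<le> v / (u * \<rho>)"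
      using that \<rho> assms v by (intro divide_left_mono mult_left_mono mult_pos_pos) auto
    ultimately show ?thesis
      using between reflect \<rho>_fixed by fastforce
  qed
  show "0 \<le> defect_slope u v C x" if "v / u \<le> x"
  proof -
    have "0 < v / u"
      using assms v by simp
    with that have "0 < x"
      by linarith
    moreover have "0 < v / (u * x)" "v / (u * x) \<le> 1"
      using that assms v by (auto simp: field_simps)
    ultimately show ?thesis
      using le_1 reflect by fastforce
  qed
qed

lemma jensen_gap_le_sq_diff:
  assumes "u + v = 1" "0 < u" "u \<le> v"
    and "2 * u * v \<le> C" "C \<le> sqrt (u * v)" "C * (v - u) = u * v * ln (v / u)"
    and "0 < s"
  shows "jensen_gap u v (s^2) 1 \<le> C * (s - 1)^2"
proof -
  note signs = defect_slope_upper_signs[OF assms(1-6)]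
  have v: "0 < v"
    using assms by simp
  consider "s \<le> 1" | "1 \<le> s" "s \<le> sqrt (v / u)"
    | "sqrt (v / u) \<le> s" "s \<le> v / u" | "v / u \<le> s"
    by linarith
  then have "0 \<le> scaled_defect u v C s"
  proof cases
    case 1
    then have "scaled_defect u v C 1 \<le> scaled_defect u v C s"
      using assms v signs(1) by (intro scaled_defect_antimono) auto
    then show ?thesis
      using assms by (simp add: scaled_defect_at_1)
  next
    case 2
    then have "scaled_defect u v C 1 \<le> scaled_defect u v C s"
      using assms v signs(2) by (intro scaled_defect_mono) auto
    then show ?thesis
      using assms by (simp add: scaled_defect_at_1)
  next
    case 3
    then have "scaled_defect u v C (v / u) \<le> scaled_defect u v C s"
      using assms v signs(3) by (intro scaled_defect_antimono) auto
    then show ?thesis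
      using assms v by (simp add: scaled_defect_at_ratio)
  next
    case 4
    then have "scaled_defect u v C (v / u) \<le> scaled_defect u v C s"
      using assms v signs(4) by (intro scaled_defect_mono) auto
    then show ?thesis
      using assms v by (simp add: scaled_defect_at_ratio)
  qed
  then show ?thesis
    using assms v by (simp add: scaled_defect_nonneg_iff)
qed

lemma jensen_gap_le_Ufun:
  assumes "0 < l" "l < 1" "0 \<le> s"
  shows "jensen_gap l (1 - l) (s^2) 1 \<le> Ufun l / 2 * (s - 1)^2"
proof -
  have pos: "jensen_gap l (1 - l) (x^2) 1 \<le> Ufun l / 2 * (x - 1)^2" if "0 < x" for x
  proof (cases "l \<le> 1/2")
    case True
    then show ?thesis
      using Ufun_half_bounds[OF assms(1) True] assms that by (intro jensen_gap_le_sq_diff) auto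
  next
    case False
    then have "jensen_gap (1 - l) l ((1 / x)^2) 1 \<le> Ufun (1 - l) / 2 * (1 / x - 1)^2"
      using Ufun_half_bounds[of "1 - l"] assms that by (intro jensen_gap_le_sq_diff) auto
    then have "0 \<le> x^2 * (Ufun l / 2 * (1 / x - 1)^2 - jensen_gap (1 - l) l ((1 / x)^2) 1)"
      using Ufun_sym[OF assms(1,2)] by simp
    then show ?thesis
      using jensen_gap_reflect[of l "1 - l" x "Ufun l / 2"] assms that by simp
  qed
  show ?thesis
  proof (cases "s = 0")
    case True
    \<comment> \<open>The reflection needs s > 0; the endpoint follows by continuity.\<close>
    have ev: "\<forall>\<^sub>F x in at_right 0. jensen_gap l (1 - l) (x^2) 1 \<le> Ufun l / 2 * (x - 1)^2"
      using pos eventually_at_right_field zero_less_one by blast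
    have lim_U: "((\<lambda>x. Ufun l / 2 * (x - 1)^2) \<longlongrightarrow> Ufun l / 2 * (0 - 1)^2) (at_right 0)"
      by (intro tendsto_intros)
    have lim_J: "((\<lambda>x. jensen_gap l (1 - l) (x^2) 1) \<longlongrightarrow> jensen_gap l (1 - l) 0 1) (at_right 0)"
      using assms by (intro tendsto_jensen_gap_at_right_0) simp
    have "jensen_gap l (1 - l) 0 1 \<le> Ufun l / 2 * (0 - 1)^2"
      by (rule tendsto_le[OF _ lim_U lim_J ev]) simp
    then show ?thesis
      using True by simp
  qed (use pos assms in auto)
qed

lemma jensen_gap_hellinger_bounds_pos:
  assumes "0 < l" "l < 1" "0 \<le> p" "0 < q"
  shows "Lfun l / 2 * (sqrt p - sqrt q)^2 \<le> jensen_gap l (1 - l) p q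
       \<and> jensen_gap l (1 - l) p q \<le> Ufun l / 2 * (sqrt p - sqrt q)^2"
proof -
  define s where "s = sqrt (p / q)"
  have "jensen_gap l (1 - l) p q = jensen_gap l (1 - l) (q * s^2) (q * 1)"
    using assms by (simp add: s_def)
  also have "\<dots> = q * jensen_gap l (1 - l) (s^2) 1"
    using assms by (intro jensen_gap_scale) auto
  finally have J: "jensen_gap l (1 - l) p q = q * jensen_gap l (1 - l) (s^2) 1" .
  have "sqrt p - sqrt q = sqrt q * (s - 1)"
    using assms by (simp add: s_def real_sqrt_divide algebra_simps)
  then have H: "(sqrt p - sqrt q)^2 = q * (s - 1)^2"
    using assms by (simp add: power_mult_distrib)
  have "q * (Lfun l / 2 * (s - 1)^2) \<le> q * jensen_gap l (1 - l) (s^2) 1"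
    "q * jensen_gap l (1 - l) (s^2) 1 \<le> q * (Ufun l / 2 * (s - 1)^2)"
    using Lfun_le_jensen_gap[of l s] jensen_gap_le_Ufun[of l s] assms
    by (simp_all add: s_def mult_left_mono)
  then show ?thesis
    unfolding J H by (simp add: ac_simps)
qed

lemma jensen_gap_hellinger_bounds:
  assumes "0 < l" "l < 1" "0 \<le> p" "0 \<le> q"
  shows "Lfun l / 2 * (sqrt p - sqrt q)^2 \<le> jensen_gap l (1 - l) p q
       \<and> jensen_gap l (1 - l) p q \<le> Ufun l / 2 * (sqrt p - sqrt q)^2"
proof -
  consider "0 < q" | "q = 0" "0 < p" | "p = 0" "q = 0"
    using assms by linarith
  then show ?thesis
  proof cases
    case 1
    then show ?thesis
      using jensen_gap_hellinger_bounds_pos assms by blast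
  next
    case 2
    have "jensen_gap l (1 - l) p q = jensen_gap (1 - l) (1 - (1 - l)) q p"
      by (simp add: jensen_gap_commute)
    moreover have "(sqrt p - sqrt q)^2 = (sqrt q - sqrt p)^2"
      by (simp add: power2_commute)
    moreover have "Lfun (1 - l) = Lfun l"
      unfolding Lfun_def by simp
    ultimately show ?thesis
      using jensen_gap_hellinger_bounds_pos[of "1 - l" q p] Ufun_sym assms 2 by simp
  next
    case 3
    then show ?thesis
      by (simp add: jensen_gap_def)
  qed
qed

lemma KL_eq_sum:
  fixes P M :: "'a::finite \<Rightarrow> real"
  assumes "\<And>i. 0 \<le> P i" "\<And>i. 0 < P i \<Longrightarrow> 0 < M i"
  shows "KL P M = (\<Sum>i\<in>UNIV. P i * ln (P i) - P i * ln (M i))"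
proof -
  have "KL P M = (\<Sum>i | 0 < P i. P i * ln (P i) - P i * ln (M i))"
    unfolding KL_def
  proof (intro sum.cong refl)
    fix i
    assume "i \<in> {i. 0 < P i}"
    then have "0 < P i" "0 < M i"
      using assms by auto
    then show "P i * ln (P i / M i) = P i * ln (P i) - P i * ln (M i)"
      by (simp add: ln_div right_diff_distrib)
  qed
  also have "\<dots> = (\<Sum>i\<in>UNIV. P i * ln (P i) - P i * ln (M i))"
    using assms by (intro sum.mono_neutral_left) (auto simp: le_less)
  finally show ?thesis .
qed

lemma GJS_eq_sum_jensen_gap:
  fixes P Q :: "'a::finite \<Rightarrow> real"
  assumes "\<And>i. 0 \<le> P i" "\<And>i. 0 \<le> Q i" "0 < l" "l < 1"
  shows "GJS l P Q = (\<Sum>i\<in>UNIV. jensen_gap l (1 - l) (P i) (Q i))"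
proof -
  define M where "M = (\<lambda>i. l * P i + (1 - l) * Q i)"
  have M_pos: "0 < M i" if "0 < P i \<or> 0 < Q i" for i
    using assms(1,2)[of i] assms(3,4) that unfolding M_def by (auto intro: add_pos_nonneg add_nonneg_pos)
  have "GJS l P Q = l * KL P M + (1 - l) * KL Q M"
    unfolding GJS_def M_def Let_def ..
  also have "\<dots> = (\<Sum>i\<in>UNIV. l * (P i * ln (P i) - P i * ln (M i))
                        + (1 - l) * (Q i * ln (Q i) - Q i * ln (M i)))"
    using assms M_pos
    by (simp add: KL_eq_sum[of P M] KL_eq_sum[of Q M] sum_distrib_left sum.distrib)
  also have "\<dots> = (\<Sum>i\<in>UNIV. jensen_gap l (1 - l) (P i) (Q i))"
    by (simp add: jensen_gap_def M_def algebra_simps)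
  finally show ?thesis .
qed

lemma hellinger_sq_pos:
  fixes P Q :: "'a::finite \<Rightarrow> real"
  assumes "\<And>i. 0 \<le> P i" "\<And>i. 0 \<le> Q i" "P \<noteq> Q"
  shows "0 < hellinger_sq P Q"
proof -
  obtain j where "P j \<noteq> Q j"
    using assms(3) by auto
  then have "0 < (sqrt (P j) - sqrt (Q j))^2"
    using assms by simp
  then show ?thesis
    unfolding hellinger_sq_def by (simp add: sum_pos2[where i = j])
qed

lemma GJS_hellinger_bounds:
  fixes P Q :: "'a::finite \<Rightarrow> real"
  assumes "\<And>i. 0 \<le> P i" "\<And>i. 0 \<le> Q i" "0 < l" "l < 1"
  shows "Lfun l * hellinger_sq P Q \<le> GJS l P Q" and "GJS l P Q \<le> Ufun l * hellinger_sq P Q"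
proof -
  have H: "c * hellinger_sq P Q = (\<Sum>i\<in>UNIV. c / 2 * (sqrt (P i) - sqrt (Q i))^2)" for c
    unfolding hellinger_sq_def by (simp add: sum_distrib_left)
  show "Lfun l * hellinger_sq P Q \<le> GJS l P Q" "GJS l P Q \<le> Ufun l * hellinger_sq P Q"
    unfolding H GJS_eq_sum_jensen_gap[OF assms]
    using jensen_gap_hellinger_bounds[OF assms(3,4) assms(1,2)] by (auto intro: sum_mono)
qed

theorem theorem1:
  fixes P Q :: "'a::finite \<Rightarrow> real"
  assumes "is_distr P" and "is_distr Q" and "P \<noteq> Q"
  shows "(\<forall>l. 0 < l \<and> l < 1 \<longrightarrow>
            Lfun l * hellinger_sq P Q \<le> GJS l P Q \<and>
            GJS l P Q \<le> Ufun l * hellinger_sq P Q \<and>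
            Ufun l * hellinger_sq P Q \<le> hellinger_sq P Q)
       \<and> ln 2 \<le> JS P Q / hellinger_sq P Q \<and> JS P Q / hellinger_sq P Q \<le> 1"
proof -
  have P: "\<And>i. 0 \<le> P i" and Q: "\<And>i. 0 \<le> Q i"
    using assms(1,2) unfolding is_distr_def by auto
  have H: "0 < hellinger_sq P Q"
    using hellinger_sq_pos[OF P Q assms(3)] .
  have bounds: "Lfun l * hellinger_sq P Q \<le> GJS l P Q \<and>
      GJS l P Q \<le> Ufun l * hellinger_sq P Q \<and> Ufun l * hellinger_sq P Q \<le> hellinger_sq P Q"
    if "0 < l" "l < 1" for l
  proof -
    have "Ufun l * hellinger_sq P Q \<le> 1 * hellinger_sq P Q"
      using Ufun_le_one[OF that] H by (intro mult_right_mono) auto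
    then show ?thesis
      using GJS_hellinger_bounds[of P Q l] P Q that by simp
  qed
  have "Lfun (1/2) = ln 2" "Ufun (1/2) = 1"
    by (simp_all add: Lfun_def eta_def Ufun_def ln_div)
  then have "ln 2 * hellinger_sq P Q \<le> JS P Q" "JS P Q \<le> hellinger_sq P Q"
    using bounds[of "1/2"] unfolding JS_def by auto
  then show ?thesis
    using bounds H by (simp add: pos_le_divide_eq pos_divide_le_eq)
qed

end
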